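(* There is no equilateral hyperbolic Heron triangle.
   Context: All triangles are non-degenerate, bounded triangles in the hyperbolic plane (curvature $-1$), with side lengths $a,b,c>0$, opposite angles $\alpha,\beta,\gamma>0$, and area $A=\pi-\alpha-\beta-\gamma$. A hyperbolic Heron triangle is one with $e^a,e^b,e^c\in\mathbb{Q}$ and $e^{i\alpha},e^{i\beta},e^{i\gamma},e^{iA}\in\mathbb{Q}[i]$. *)

theory Defs
  imports Complex_Main
begin

text \<open>A (non-degenerate, bounded) triangle in the hyperbolic plane of curvature -1,
  described by its side lengths a b c and opposite angles al be ga. Such a triangle
  exists iff the side lengths are positive and satisfy the strict triangle inequalities;
  its angles are then determined by the hyperbolic law of cosines.\<close>
definition hyp_triangle :: "real \<Rightarrow> real \<Rightarrow> real \<Rightarrow> real \<Rightarrow> real \<Rightarrow> real \<Rightarrow> bool" where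
  "hyp_triangle a b c al be ga \<longleftrightarrow>
     a > 0 \<and> b > 0 \<and> c > 0 \<and> a < b + c \<and> b < a + c \<and> c < a + b \<and>
     0 < al \<and> al < pi \<and> 0 < be \<and> be < pi \<and> 0 < ga \<and> ga < pi \<and>
     cos al = (cosh b * cosh c - cosh a) / (sinh b * sinh c) \<and>
     cos be = (cosh a * cosh c - cosh b) / (sinh a * sinh c) \<and>
     cos ga = (cosh a * cosh b - cosh c) / (sinh a * sinh b)"

definition hyp_area :: "real \<Rightarrow> real \<Rightarrow> real \<Rightarrow> real" where
  "hyp_area al be ga = pi - al - be - ga"

definition gauss_rat :: "complex \<Rightarrow> bool" where
  "gauss_rat z \<longleftrightarrow> Re z \<in> \<rat> \<and> Im z \<in> \<rat>"

definition hyp_heron :: "real \<Rightarrow> real \<Rightarrow> real \<Rightarrow> real \<Rightarrow> real \<Rightarrow> real \<Rightarrow> bool" where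
  "hyp_heron a b c al be ga \<longleftrightarrow>
     hyp_triangle a b c al be ga \<and>
     exp a \<in> \<rat> \<and> exp b \<in> \<rat> \<and> exp c \<in> \<rat> \<and>
     gauss_rat (exp (\<i> * of_real al)) \<and> gauss_rat (exp (\<i> * of_real be)) \<and>
     gauss_rat (exp (\<i> * of_real ga)) \<and> gauss_rat (exp (\<i> * of_real (hyp_area al be ga)))"

end

theory Submission
  imports Defs "HOL-Computational_Algebra.Nth_Powers"
begin

(* In an equilateral triangle of side a the law of cosines gives
   cos \<alpha> = cosh a / (cosh a + 1) = (t^2 + 1) / (t + 1)^2 with t = e^a,
   hence (sin \<alpha> (t + 1)^2 / 2)^2 = t (t^2 + t + 1).  For a Heron triangle t and
   sin \<alpha> are rational, so with t = p/q in lowest terms p q (p^2 + p q + q^2) is a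
   perfect square.  The three factors are pairwise coprime, so p = M^2, q = K^2 and
   M^4 + M^2 K^2 + K^4 is a square.  This is impossible by infinite descent: from a
   primitive solution of m^4 + m^2 k^2 + k^4 = n^2 with m odd and k = 2h even, the
   factorisation (n - D) (n + D) = 12 h^4 with D = m^2 + 2 h^2 leads to a solution
   with smaller n. *)


lemma coprime_int_if_no_common_prime_divisor:
  fixes a b :: int
  assumes "\<And>p. prime p \<Longrightarrow> p dvd a \<Longrightarrow> p dvd b \<Longrightarrow> False"
  shows "coprime a b"
proof (rule coprimeI)
  fix c assume "c dvd a" "c dvd b"
  show "is_unit c"
  proof (rule ccontr)
    assume "\<not> is_unit c"
    moreover have "c \<noteq> 0" using assms[of 2] \<open>c dvd a\<close> \<open>c dvd b\<close> by auto
    ultimately obtain p where "prime p" "p dvd c" using prime_divisor_exists by blast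
    then show False using assms \<open>c dvd a\<close> \<open>c dvd b\<close> by (meson dvd_trans)
  qed
qed

lemma coprime_mult_eq_power_int:
  fixes x y c :: int
  assumes "coprime x y" "x > 0" "y > 0" "x * y = c ^ d" "d > 0"
  obtains r s where "r > 0" "s > 0" "x = r ^ d" "y = s ^ d"
proof -
  have cop: "coprime (nat x) (nat y)"
    using assms(1-3) by (simp add: coprime_int_iff[symmetric])
  have "nat x * nat y = nat \<bar>c\<bar> ^ d"
    using assms(2-4) by (metis abs_mult abs_of_pos nat_mult_distrib nat_power_eq power_abs abs_ge_zero)
  then have "is_nth_power d (nat x)" "is_nth_power d (nat y)"
    using is_nth_power_mult_coprime_natD[OF cop] assms(2,3) by (metis is_nth_powerI zero_less_nat_eq)+
  then obtain r s where "nat x = r ^ d" "nat y = s ^ d" unfolding is_nth_power_def by blast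
  then have "x = int r ^ d" "y = int s ^ d" using assms(2,3) by (metis int_nat_eq less_le of_nat_power)+
  moreover have "int r > 0" "int s > 0"
    using calculation assms(2,3,5) by (auto simp: zero_power)
  ultimately show thesis using that by blast
qed

lemma odd_dvd_4_mult_int:
  fixes p t :: int
  assumes "odd p" "p dvd 4 * t"
  shows "p dvd t"
proof -
  have "coprime p 2" using assms(1) by simp
  then have "coprime p 4" using coprime_power_right_iff[of p 2 2] by simp
  then show ?thesis using assms(2) by (simp add: coprime_dvd_mult_right_iff)
qed

lemma odd_square_factors_are_squares:
  fixes r s m X Y :: int
  assumes "coprime r s" "odd m" "m^2 = X * Y" "X > 0"
    and common: "\<And>p. p dvd X \<Longrightarrow> p dvd Y \<Longrightarrow> p dvd 4 * r^2 \<and> p dvd 4 * s^2"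
  obtains x y where "x > 0" "y > 0" "X = x^2" "Y = y^2" "coprime x y"
proof -
  have "m \<noteq> 0" using assms(2) by auto
  then have "m^2 > 0" by simp
  then have "Y > 0" using assms(3,4) by (simp add: zero_less_mult_iff)
  have "coprime X Y"
  proof (rule coprime_int_if_no_common_prime_divisor)
    fix p :: int assume p: "prime p" "p dvd X" "p dvd Y"
    then have "p dvd m^2" using assms(3) by simp
    then have "p dvd m" using p(1) prime_dvd_power by blast
    have "odd p"
    proof
      assume "even p"
      then have "even m" using \<open>p dvd m\<close> by (rule dvd_trans)
      with assms(2) show False ..
    qed
    then have "p dvd r^2" "p dvd s^2" using common[OF p(2,3)] odd_dvd_4_mult_int by blast+
    then have "p dvd r" "p dvd s" using p(1) prime_dvd_power by blast+
    then show False using assms(1) p(1) by (meson coprime_common_divisor not_prime_unit)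
  qed
  then obtain x y where "x > 0" "y > 0" "X = x^2" "Y = y^2"
    using coprime_mult_eq_power_int[OF _ assms(4) \<open>Y > 0\<close> assms(3)[symmetric]] by auto
  moreover have "coprime x y" using \<open>coprime X Y\<close> calculation by simp
  ultimately show thesis using that by blast
qed

lemma quartic_descent_r2_plus_s2:
  fixes r s m :: int
  assumes "coprime r s" "s > 0" "odd m" "m^2 = (r^2 + s^2) * (r^2 - 3*s^2)"
  obtains M K where "M > 0" "K > 0" "M^4 + M^2*K^2 + K^4 = r^2"
proof -
  obtain x y where xy: "x > 0" "y > 0" "r^2 + s^2 = x^2" "r^2 - 3*s^2 = y^2" "coprime x y"
  proof (rule odd_square_factors_are_squares[OF assms(1,3,4)])
    show "r^2 + s^2 > 0" using assms(2) by (simp add: add_nonneg_pos)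
    fix p assume X: "p dvd r^2 + s^2" and Y: "p dvd r^2 - 3*s^2"
    have r: "4 * r^2 = 3 * (r^2 + s^2) + (r^2 - 3*s^2)" and s: "4 * s^2 = (r^2 + s^2) - (r^2 - 3*s^2)"
      by simp_all
    show "p dvd 4 * r^2 \<and> p dvd 4 * s^2"
      unfolding r s using dvd_add[OF dvd_mult[OF X] Y] dvd_diff[OF X Y] by blast
  qed
  have "m^2 = (x * y)^2" using assms(4) xy(3,4) by (simp add: power_mult_distrib)
  moreover have "odd (m^2)" using assms(3) by simp
  ultimately have "odd (x * y)" by simp
  then have "odd x" "odd y" by simp_all
  have xy_diff: "x^2 - y^2 = 4 * s^2" using xy(3,4) by linarith
  have "y < x"
  proof -
    have "s^2 > 0" using assms(2) by simp
    then have "y^2 < x^2" using xy_diff by linarith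
    then show ?thesis using xy(1,2) by (simp add: power_less_imp_less_base)
  qed
  have "even (x + y)" using \<open>odd x\<close> \<open>odd y\<close> by simp
  then obtain u where "x + y = 2 * u" by blast
  define w where "w = u - y"
  have x: "x = u + w" and y: "y = u - w" using \<open>x + y = 2 * u\<close> by (simp_all add: w_def)
  have "u > 0" "w > 0" using xy(2) \<open>y < x\<close> unfolding x y by simp_all
  have "4 * (u * w) = x^2 - y^2" unfolding x y by algebra
  then have uw: "u * w = s^2" using xy_diff by simp
  have "coprime u w"
  proof (rule coprimeI)
    fix c assume "c dvd u" "c dvd w"
    then have "c dvd x" "c dvd y" unfolding x y by simp_all
    with xy(5) show "is_unit c" by (rule coprime_common_divisor)
  qed
  then obtain M K where "M > 0" "K > 0" "u = M^2" "w = K^2"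
    using coprime_mult_eq_power_int[OF _ \<open>u > 0\<close> \<open>w > 0\<close> uw] by auto
  moreover have "M^4 + M^2*K^2 + K^4 = r^2"
  proof -
    have "M^4 + M^2*K^2 + K^4 = (u + w)^2 - u * w" unfolding calculation(3,4) by algebra
    also have "\<dots> = r^2" using xy(3) uw unfolding x[symmetric] by simp
    finally show ?thesis .
  qed
  ultimately show thesis using that by blast
qed

lemma quartic_descent_3r2_plus_s2:
  fixes r s m :: int
  assumes "coprime r s" "r > 0" "s > 0" "odd m" "m^2 = (3*r^2 + s^2) * (r^2 - s^2)"
  obtains M K x where "M > 0" "K > 0" "x > 0" "x^2 = 3*r^2 + s^2" "M^4 + M^2*K^2 + K^4 = x^2"
proof -
  obtain x y where xy: "x > 0" "y > 0" "3*r^2 + s^2 = x^2" "r^2 - s^2 = y^2" "coprime x y"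
  proof (rule odd_square_factors_are_squares[OF assms(1,4,5)])
    show "3*r^2 + s^2 > 0" using assms(3) by (simp add: add_nonneg_pos)
    fix p assume X: "p dvd 3*r^2 + s^2" and Y: "p dvd r^2 - s^2"
    have r: "4 * r^2 = (3*r^2 + s^2) + (r^2 - s^2)" and s: "4 * s^2 = (3*r^2 + s^2) - 3 * (r^2 - s^2)"
      by simp_all
    show "p dvd 4 * r^2 \<and> p dvd 4 * s^2"
      unfolding r s using dvd_add[OF X Y] dvd_diff[OF X dvd_mult[OF Y]] by blast
  qed
  have "m^2 = (x * y)^2" using assms(5) xy(3,4) by (simp add: power_mult_distrib)
  moreover have "odd (m^2)" using assms(4) by simp
  ultimately have "odd y" by simp
  have "y^2 = (r + s) * (r - s)" using xy(4) by algebra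
  moreover have "r + s > 0" using assms(2,3) by simp
  moreover have "p dvd 4 * r^2 \<and> p dvd 4 * s^2" if "p dvd r + s" "p dvd r - s" for p
  proof -
    have "p dvd (r + s) + (r - s)" "p dvd (r + s) - (r - s)" using that by (simp_all only: dvd_add dvd_diff)
    then have "p dvd 2 * r" "p dvd 2 * s" by simp_all
    then have "p dvd (2 * r)^2" "p dvd (2 * s)^2" by (simp_all only: dvd_mult2 power2_eq_square)
    then show ?thesis by (simp add: power_mult_distrib)
  qed
  ultimately obtain M K where MK: "M > 0" "K > 0" "r + s = M^2" "r - s = K^2"
    using odd_square_factors_are_squares[OF assms(1) \<open>odd y\<close>] by metis
  have "M^4 + M^2*K^2 + K^4 = (r + s)^2 + (r + s) * (r - s) + (r - s)^2"
    unfolding MK(3,4) by algebra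
  also have "\<dots> = x^2" using xy(3) by algebra
  finally show thesis using that MK(1,2) xy(1,3) by simp
qed

definition quartic_triple :: "int \<Rightarrow> int \<Rightarrow> int \<Rightarrow> bool" where
  "quartic_triple m k n \<longleftrightarrow> m > 0 \<and> k > 0 \<and> n > 0 \<and> m^4 + m^2*k^2 + k^4 = n^2"

lemma quartic_triple_commute: "quartic_triple m k n \<longleftrightarrow> quartic_triple k m n"
  unfolding quartic_triple_def by (simp add: ac_simps)

lemma quartic_triple_odd_even_factorization:
  assumes "quartic_triple m k n" "coprime m k" "odd m" "even k"
  obtains a b h where "a > 0" "b > 0" "h > 0" "coprime a b" "a * b = 3 * h^4"
    "n = a + b" "m^2 + 2*h^2 = a - b"
proof -
  have m: "m > 0" and n: "n > 0" and eq: "m^4 + m^2*k^2 + k^4 = n^2"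
    using assms(1) unfolding quartic_triple_def by auto
  obtain h where k: "k = 2 * h" using assms(4) by blast
  have "h > 0" using assms(1) k unfolding quartic_triple_def by simp
  define D where "D = m^2 + 2*h^2"
  have nD: "n^2 = D^2 + 12*h^4" using eq unfolding k D_def by algebra
  have "D > 0" unfolding D_def using m by (simp add: add_pos_nonneg)
  have "D^2 < n^2" using nD \<open>h > 0\<close> by simp
  then have "D < n" using n by (simp add: power_less_imp_less_base)
  have "odd D" unfolding D_def using assms(3) by simp
  then have "odd (n^2)" using nD by simp
  then have "odd n" by simp
  then have "even (n + D)" using \<open>odd D\<close> by simp
  then obtain a where a: "n + D = 2 * a" by blast
  define b where "b = a - D"
  have nab: "n = a + b" and Dab: "D = a - b" using a unfolding b_def by simp_all
  have "4 * (a * b) = 4 * (3 * h^4)" using nD unfolding nab Dab by algebra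
  then have ab: "a * b = 3 * h^4" by simp
  have "b > 0" "a > 0" using \<open>D < n\<close> \<open>D > 0\<close> nab Dab by simp_all
  moreover have "coprime a b"
  proof (rule coprime_int_if_no_common_prime_divisor)
    fix p :: int assume p: "prime p" "p dvd a" "p dvd b"
    have "p dvd h"
    proof (rule ccontr)
      assume "\<not> p dvd h"
      then have "coprime (p^2) (h^4)" using p(1) by (simp add: prime_imp_coprime)
      moreover have "p^2 dvd 3 * h^4"
        using p(2,3) ab by (metis mult_dvd_mono power2_eq_square)
      ultimately have "p^2 dvd 3" by (simp add: coprime_dvd_mult_left_iff)
      then have "p^2 \<le> 3" by (simp add: zdvd_imp_le)
      moreover have "2^2 \<le> p^2" using prime_ge_2_int[OF p(1)] by (intro power_mono) simp_all
      ultimately show False by simp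
    qed
    then have "p dvd D - 2*h^2" using p(2,3) Dab by (simp add: power2_eq_square)
    then have "p dvd m" using p(1) unfolding D_def by (simp add: prime_dvd_power)
    moreover have "p dvd k" using \<open>p dvd h\<close> k by simp
    ultimately show False using assms(2) p(1) by (meson coprime_common_divisor not_prime_unit)
  qed
  ultimately show thesis using that \<open>h > 0\<close> ab nab Dab D_def by simp
qed

lemma quartic_triple_descent_3_dvd_b:
  fixes a b h m :: int
  assumes "a > 0" "b > 0" "h > 0" "coprime a b" "a * b = 3 * h^4" "3 dvd b" "odd m"
    and "m^2 + 2*h^2 = a - b"
  obtains m' k' n' where "quartic_triple m' k' n'" "n' < a + b"
proof -
  obtain b' where b: "b = 3 * b'" using assms(6) by blast
  have "b' > 0" "a * b' = h^4" "coprime a b'" using assms(2,4,5) b by simp_all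
  then obtain r s where rs: "r > 0" "s > 0" "a = r^4" "b' = s^4"
    using coprime_mult_eq_power_int[OF _ assms(1)] by (metis zero_less_numeral)
  have "(r * s)^4 = h^4" using \<open>a * b' = h^4\<close> rs by (simp add: power_mult_distrib)
  then have h: "h = r * s" using rs(1,2) assms(3) by (simp add: power_eq_iff_eq_base)
  have "coprime r s" using \<open>coprime a b'\<close> rs by simp
  moreover have "m^2 = (r^2 + s^2) * (r^2 - 3*s^2)"
    using assms(8) unfolding b h rs(3,4) by algebra
  ultimately obtain M K where "M > 0" "K > 0" "M^4 + M^2*K^2 + K^4 = r^2"
    using quartic_descent_r2_plus_s2 rs(2) assms(7) by metis
  moreover have "r < a + b"
  proof -
    have "r \<le> r^4" using rs(1) by (simp add: self_le_power)
    then show ?thesis using rs(3) assms(2) by simp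
  qed
  ultimately show thesis using that rs(1) unfolding quartic_triple_def by blast
qed

lemma quartic_triple_descent_3_dvd_a:
  fixes a b h m :: int
  assumes "a > 0" "b > 0" "h > 0" "coprime a b" "a * b = 3 * h^4" "3 dvd a" "odd m"
    and "m^2 + 2*h^2 = a - b"
  obtains m' k' n' where "quartic_triple m' k' n'" "n' < a + b"
proof -
  obtain a' where a: "a = 3 * a'" using assms(6) by blast
  have "a' > 0" "a' * b = h^4" "coprime a' b" using assms(1,4,5) a by simp_all
  then obtain r s where rs: "r > 0" "s > 0" "a' = r^4" "b = s^4"
    using coprime_mult_eq_power_int[OF _ _ assms(2)] by (metis zero_less_numeral)
  have "(r * s)^4 = h^4" using \<open>a' * b = h^4\<close> rs by (simp add: power_mult_distrib)
  then have h: "h = r * s" using rs(1,2) assms(3) by (simp add: power_eq_iff_eq_base)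
  have "coprime r s" using \<open>coprime a' b\<close> rs by simp
  moreover have "m^2 = (3*r^2 + s^2) * (r^2 - s^2)"
    using assms(8) unfolding a h rs(3,4) by algebra
  ultimately obtain M K x where MKx: "M > 0" "K > 0" "x > 0" "x^2 = 3*r^2 + s^2"
    "M^4 + M^2*K^2 + K^4 = x^2"
    using quartic_descent_3r2_plus_s2 rs(1,2) assms(7) by metis
  moreover have "x < a + b"
  proof -
    have "r^2 \<le> r^4" "s^2 \<le> s^4" using rs(1,2) by (auto intro: power_increasing)
    then have "x^2 \<le> a + b" using MKx(4) a rs(3,4) by simp
    moreover have "1 < x"
    proof -
      have "1 \<le> r^2" using rs(1) by (simp add: one_le_power)
      moreover have "0 \<le> s^2" by simp
      ultimately have "x^2 \<noteq> 1" using MKx(4) by linarith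
      then show ?thesis using MKx(3) by (cases "x = 1") auto
    qed
    then have "x < x^2" by (simp add: power2_eq_square)
    ultimately show ?thesis by simp
  qed
  ultimately show thesis using that unfolding quartic_triple_def by blast
qed

lemma quartic_triple_descent_odd_even:
  assumes "quartic_triple m k n" "coprime m k" "odd m" "even k"
  obtains m' k' n' where "quartic_triple m' k' n'" "n' < n"
proof -
  obtain a b h where ab: "a > 0" "b > 0" "h > 0" "coprime a b" "a * b = 3 * h^4"
    and n: "n = a + b" and m: "m^2 + 2*h^2 = a - b"
    using quartic_triple_odd_even_factorization[OF assms] by blast
  have "3 dvd a * b" using ab(5) by simp
  then have "3 dvd a \<or> 3 dvd b" by (simp add: prime_dvd_mult_iff)
  then show thesis
    using quartic_triple_descent_3_dvd_a[OF ab _ assms(3) m]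
      quartic_triple_descent_3_dvd_b[OF ab _ assms(3) m] that
    unfolding n by blast
qed

lemma quartic_triple_descent_not_coprime:
  assumes "quartic_triple m k n" "\<not> coprime m k"
  obtains m' k' n' where "quartic_triple m' k' n'" "n' < n"
proof -
  have m: "m > 0" and k: "k > 0" and n: "n > 0" and eq: "m^4 + m^2*k^2 + k^4 = n^2"
    using assms(1) unfolding quartic_triple_def by auto
  define g where "g = gcd m k"
  have "g > 1" using assms(2) m unfolding g_def
    by (metis coprime_iff_gcd_eq_1 gcd_pos_int less_le zero_less_iff_neq_zero int_one_le_iff_zero_less)
  obtain m' k' where m': "m = g * m'" and k': "k = g * k'" unfolding g_def by (meson dvdE gcd_dvd1 gcd_dvd2)
  have "m' > 0" "k' > 0" using m k m' k' \<open>g > 1\<close> by (simp_all add: zero_less_mult_iff)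
  have eq': "(g^2)^2 * (m'^4 + m'^2*k'^2 + k'^4) = n^2" using eq unfolding m' k' by algebra
  then have "(g^2)^2 dvd n^2" by (metis dvd_triv_left)
  then have "g^2 dvd n" using pow_divides_pow_iff[of 2 "g^2" n] by simp
  then obtain n' where n': "n = g^2 * n'" by blast
  have "1 < g^2" using \<open>g > 1\<close> by simp
  then have "n' > 0" "n' < n" using n n' by (simp_all add: zero_less_mult_iff)
  moreover have "m'^4 + m'^2*k'^2 + k'^4 = n'^2"
    using eq' \<open>g > 1\<close> unfolding n' by (simp add: power_mult_distrib)
  ultimately show thesis using that \<open>m' > 0\<close> \<open>k' > 0\<close> unfolding quartic_triple_def by blast
qed

lemma odd_square_int_cases:
  fixes x :: int
  assumes "odd x"
  obtains i where "x^2 = 4 * i + 1"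
proof -
  obtain t where "x = 2 * t + 1" using assms by (rule oddE)
  then have "x^2 = 4 * (t^2 + t) + 1" by (simp add: power2_eq_square algebra_simps)
  then show thesis by (rule that)
qed

lemma quartic_sum_not_square_if_odd:
  fixes m k n :: int
  assumes "odd m" "odd k"
  shows "m^4 + m^2*k^2 + k^4 \<noteq> n^2"
proof
  assume eq: "m^4 + m^2*k^2 + k^4 = n^2"
  obtain i j where i: "m^2 = 4 * i + 1" and j: "k^2 = 4 * j + 1"
    using assms odd_square_int_cases by metis
  have "n^2 = (m^2)^2 + m^2 * k^2 + (k^2)^2" using eq by algebra
  also have "\<dots> = 4 * (4*i^2 + 4*i*j + 4*j^2 + 3*i + 3*j) + 3" unfolding i j by algebra
  finally have n: "n^2 = 4 * (4*i^2 + 4*i*j + 4*j^2 + 3*i + 3*j) + 3" .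
  then have "odd (n^2)" by simp
  then have "odd n" by simp
  then obtain l where "n^2 = 4 * l + 1" by (rule odd_square_int_cases)
  with n show False by presburger
qed

lemma quartic_triple_descent:
  assumes "quartic_triple m k n"
  obtains m' k' n' where "quartic_triple m' k' n'" "n' < n"
proof (cases "coprime m k")
  case False
  then show thesis using quartic_triple_descent_not_coprime assms that by blast
next
  case True
  then have "\<not> (even m \<and> even k)" by auto
  moreover have "\<not> (odd m \<and> odd k)"
    using assms quartic_sum_not_square_if_odd unfolding quartic_triple_def by blast
  ultimately consider "odd m" "even k" | "even m" "odd k" by blast
  then show thesis
  proof cases
    case 1
    then show thesis using quartic_triple_descent_odd_even assms True that by blast
  next
    case 2
    moreover have "quartic_triple k m n" "coprime k m"
      using assms True by (simp_all add: quartic_triple_commute coprime_commute)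
    ultimately show thesis using quartic_triple_descent_odd_even that by blast
  qed
qed

lemma no_quartic_triple: "\<not> quartic_triple m k n"
proof (induction "nat n" arbitrary: m k n rule: less_induct)
  case less
  show ?case
  proof
    assume "quartic_triple m k n"
    then obtain m' k' n' where "quartic_triple m' k' n'" "n' < n" by (rule quartic_triple_descent)
    moreover from this have "nat n' < nat n" unfolding quartic_triple_def by simp
    ultimately show False using less by blast
  qed
qed

lemma coprime_mult_quadratic_form:
  fixes p q :: int
  assumes "coprime p q"
  shows "coprime (p * q) (p^2 + p*q + q^2)"
proof -
  have "gcd p ((p + q) * p + q^2) = gcd p (q^2)" "gcd q ((p + q) * q + p^2) = gcd q (p^2)"
    by (rule gcd_add_mult)+
  moreover have "(p + q) * p + q^2 = p^2 + p*q + q^2" "(p + q) * q + p^2 = p^2 + p*q + q^2"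
    by (simp_all add: algebra_simps power2_eq_square)
  ultimately have "coprime p (p^2 + p*q + q^2) \<longleftrightarrow> coprime p (q^2)"
    "coprime q (p^2 + p*q + q^2) \<longleftrightarrow> coprime q (p^2)"
    by (simp_all add: coprime_iff_gcd_eq_1)
  then show ?thesis using assms by (simp add: coprime_commute)
qed

lemma mult_quadratic_form_not_square:
  fixes p q W :: int
  assumes "coprime p q" "p > 0" "q > 0"
  shows "p * q * (p^2 + p*q + q^2) \<noteq> W^2"
proof
  assume "p * q * (p^2 + p*q + q^2) = W^2"
  moreover have "p^2 + p*q + q^2 > 0" using assms(2,3) by (simp add: add_pos_pos)
  moreover have "p * q > 0" using assms(2,3) by simp
  ultimately obtain A B where "A > 0" "B > 0" "p * q = A^2" "p^2 + p*q + q^2 = B^2"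
    using coprime_mult_eq_power_int coprime_mult_quadratic_form[OF assms(1)] by (metis zero_less_numeral)
  moreover obtain M K where "M > 0" "K > 0" "p = M^2" "q = K^2"
    using coprime_mult_eq_power_int[OF assms] calculation(3) by (metis zero_less_numeral)
  ultimately have "(M^2)^2 + M^2 * K^2 + (K^2)^2 = B^2" by simp
  then have "quartic_triple M K B"
    using \<open>M > 0\<close> \<open>K > 0\<close> \<open>B > 0\<close> unfolding quartic_triple_def by (simp flip: power_mult)
  then show False using no_quartic_triple by blast
qed

lemma square_if_mult_square_int:
  fixes P v w :: int
  assumes "P * v^2 = w^2" "v \<noteq> 0"
  obtains W where "P = W^2"
proof -
  have "v^2 dvd w^2" using assms(1) by (metis dvd_triv_right)
  then obtain W where "w = v * W" using pow_divides_pow_iff[of 2 v w] by (auto elim: dvdE)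
  then have "P * v^2 = W^2 * v^2" using assms(1) by (simp add: power_mult_distrib)
  then show thesis using that assms(2) by simp
qed

lemma rat_cubic_not_square:
  fixes t z :: real
  assumes "t \<in> \<rat>" "z \<in> \<rat>" "t > 0"
  shows "t * (t^2 + t + 1) \<noteq> z^2"
proof
  assume eq: "t * (t^2 + t + 1) = z^2"
  obtain p q where pq: "q > 0" "coprime p q" "t = of_int p / of_int q" using Rats_cases'[OF assms(1)] .
  obtain u v where uv: "v > 0" "z = of_int u / of_int v" using Rats_cases'[OF assms(2)] by metis
  have "p > 0" using assms(3) pq by (simp add: zero_less_divide_iff)
  have "real_of_int (p * q * (p^2 + p*q + q^2) * v^2) = real_of_int ((u * q^2)^2)"
  proof -
    have "q \<noteq> 0" "v \<noteq> 0" using pq(1) uv(1) by auto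
    then have "real_of_int p * (real_of_int p^2 + real_of_int p * real_of_int q + real_of_int q^2)
        * real_of_int v^2 = real_of_int q^3 * real_of_int u^2"
      using eq unfolding pq(3) uv(2) by (simp add: field_simps power2_eq_square power3_eq_cube)
    then show ?thesis unfolding of_int_mult of_int_add of_int_power by algebra
  qed
  then have "p * q * (p^2 + p*q + q^2) * v^2 = (u * q^2)^2" by (simp only: of_int_eq_iff)
  then obtain W where "p * q * (p^2 + p*q + q^2) = W^2"
    using square_if_mult_square_int uv(1) by (metis less_irrefl)
  then show False using mult_quadratic_form_not_square pq(1,2) \<open>p > 0\<close> by blast
qed

lemma cos_angle_equilateral_hyp_triangle:
  assumes "hyp_triangle a a a al be ga"
  shows "cos al = (exp a ^ 2 + 1) / (exp a + 1)^2"
proof -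
  have "a > 0" and cos: "cos al = (cosh a * cosh a - cosh a) / (sinh a * sinh a)"
    using assms unfolding hyp_triangle_def by auto
  have "cosh a > 1" using cosh_real_nonneg_less_iff[of 0 a] \<open>a > 0\<close> by simp
  define t where "t = exp a"
  have "t > 0" unfolding t_def by simp
  have cosh: "cosh a = (t^2 + 1) / (2 * t)"
    unfolding cosh_field_def t_def by (simp add: exp_minus field_simps power2_eq_square)
  have "sinh a * sinh a = (cosh a - 1) * (cosh a + 1)"
    using sinh_square_eq[of a] by (simp add: power2_eq_square algebra_simps)
  then have "cos al = cosh a * (cosh a - 1) / ((cosh a - 1) * (cosh a + 1))"
    using cos by (simp add: algebra_simps)
  also have "\<dots> = cosh a / (cosh a + 1)" using \<open>cosh a > 1\<close> \<open>a > 0\<close> by simp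
  also have "\<dots> = (t^2 + 1) / (t + 1)^2"
  proof -
    have "cosh a * (2 * t) = t^2 + 1" using \<open>t > 0\<close> unfolding cosh by simp
    then have "cosh a * (t + 1)^2 = (t^2 + 1) * (cosh a + 1)" by algebra
    moreover have "cosh a + 1 \<noteq> 0" "(t + 1)^2 \<noteq> 0" using \<open>cosh a > 1\<close> \<open>t > 0\<close> by auto
    ultimately show ?thesis by (simp add: frac_eq_eq)
  qed
  finally show ?thesis unfolding t_def .
qed

lemma sin_angle_equilateral_hyp_triangle:
  assumes "hyp_triangle a a a al be ga"
  shows "(sin al * (exp a + 1)^2 / 2)^2 = exp a * (exp a ^ 2 + exp a + 1)"
proof -
  define t where "t = exp a"
  have "t + 1 \<noteq> 0" using exp_gt_zero[of a] unfolding t_def by linarith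
  have cos: "cos al = (t^2 + 1) / (t + 1)^2"
    using cos_angle_equilateral_hyp_triangle[OF assms] unfolding t_def .
  have "(sin al * (t + 1)^2 / 2)^2 = (1 - cos al ^ 2) * ((t + 1)^2)^2 / 4"
    by (simp add: sin_squared_eq power_mult_distrib power_divide)
  also have "\<dots> = (((t + 1)^2)^2 - (t^2 + 1)^2) / 4"
    unfolding cos using \<open>t + 1 \<noteq> 0\<close> by (simp add: power_divide field_simps)
  also have "\<dots> = t * (t^2 + t + 1)" by algebra
  finally show ?thesis unfolding t_def .
qed

theorem proposition4p1:
  fixes a b c al be ga :: real
  assumes "hyp_heron a b c al be ga"
    and "a = b" and "b = c"
  shows False
proof -
  have tri: "hyp_triangle a a a al be ga" and "exp a \<in> \<rat>"
    and "gauss_rat (exp (\<i> * of_real al))"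
    using assms unfolding hyp_heron_def by auto
  then have "sin al \<in> \<rat>" unfolding gauss_rat_def by (simp add: Im_exp)
  then have "sin al * (exp a + 1)^2 / 2 \<in> \<rat>" using \<open>exp a \<in> \<rat>\<close> by simp
  moreover have "exp a * (exp a ^ 2 + exp a + 1) = (sin al * (exp a + 1)^2 / 2)^2"
    using sin_angle_equilateral_hyp_triangle[OF tri] by simp
  ultimately show False using rat_cubic_not_square \<open>exp a \<in> \<rat>\<close> exp_gt_zero by blast
qed

end
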